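(* Let $G$ be a graph of girth at least five and maximum average degree $d\ge2$. Every fractional $2$-guidance system and every weak $2$-guidance system of $G$ has maximum outdegree at least $d/2$.
   Context: All graphs are finite, simple and undirected. The maximum average degree of $G$ is the maximum average degree of its subgraphs. For $u,v$ at distance $\ell$, $\Gamma_G(u,v)$ is the set of neighbors of $u$ at distance $\ell-1$ from $v$. A partial orientation of $G$ is a directed graph $\vec{H}$ on $V(G)$ with every $(u,v)\in E(\vec{H})$ satisfying $uv\in E(G)$. $B_{\vec{H}}(v,a)$ is the set of vertices reachable from $v$ by a directed path of length at most $a$. A weak $r$-guidance system is a partial orientation $\vec{H}$ such that for any distinct $u,v$ at distance $\ell\le r$ there exist non-negative integers $a,b$ with $a+b=\ell-1$ such that $G$ has an edge between $B_{\vec{H}}(u,a)$ and $B_{\vec{H}}(v,b)$. A fractional orientation assigns a non-negative real $p(u,v)$ to each ordered pair of adjacent vertices; its maximum outdegree is $\max_u\sum_{v:uv\in E(G)}p(u,v)$. A fractional $r$-guidance system is a fractional orientation with $\sum_{y\in\Gamma_G(u,v)}p(u,y)+\sum_{y\in\Gamma_G(v,u)}p(v,y)\ge1$ for all $u,v$ at distance between $2$ and $r$. *)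

theory Defs
  imports Complex_Main
begin

definition simple_graph :: "'a set \<Rightarrow> 'a set set \<Rightarrow> bool" where
  "simple_graph V E \<longleftrightarrow> finite V \<and>
     (\<forall>e\<in>E. \<exists>u v. e = {u, v} \<and> u \<noteq> v \<and> u \<in> V \<and> v \<in> V)"

definition adj :: "'a set set \<Rightarrow> 'a \<Rightarrow> 'a \<Rightarrow> bool" where
  "adj E u v \<longleftrightarrow> {u, v} \<in> E"

definition nbrs :: "'a set \<Rightarrow> 'a set set \<Rightarrow> 'a \<Rightarrow> 'a set" where
  "nbrs V E u = {v \<in> V. adj E u v}"

definition walk :: "'a set set \<Rightarrow> 'a list \<Rightarrow> bool" where
  "walk E xs \<longleftrightarrow> xs \<noteq> [] \<and> (\<forall>i. Suc i < length xs \<longrightarrow> adj E (xs ! i) (xs ! Suc i))"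

definition cycle :: "'a set set \<Rightarrow> 'a list \<Rightarrow> bool" where
  "cycle E xs \<longleftrightarrow> length xs \<ge> 3 \<and> distinct xs \<and> walk E xs \<and> adj E (last xs) (hd xs)"

text \<open>Girth at least g (vacuous for forests, whose girth is infinite).\<close>
definition girth_at_least :: "'a set set \<Rightarrow> nat \<Rightarrow> bool" where
  "girth_at_least E g \<longleftrightarrow> (\<forall>xs. cycle E xs \<longrightarrow> length xs \<ge> g)"

definition mad :: "'a set \<Rightarrow> 'a set set \<Rightarrow> real" where
  "mad V E = Max {2 * real (card F) / real (card S) | S F.
      S \<subseteq> V \<and> S \<noteq> {} \<and> F \<subseteq> E \<and> (\<forall>e\<in>F. e \<subseteq> S)}"

definition dist_le :: "'a set set \<Rightarrow> 'a \<Rightarrow> 'a \<Rightarrow> nat \<Rightarrow> bool" where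
  "dist_le E u v n \<longleftrightarrow> (\<exists>xs. walk E xs \<and> hd xs = u \<and> last xs = v \<and> length xs \<le> Suc n)"

definition gdist :: "'a set set \<Rightarrow> 'a \<Rightarrow> 'a \<Rightarrow> nat \<Rightarrow> bool" where
  "gdist E u v l \<longleftrightarrow> dist_le E u v l \<and> (\<forall>m<l. \<not> dist_le E u v m)"

definition Gamma :: "'a set \<Rightarrow> 'a set set \<Rightarrow> 'a \<Rightarrow> 'a \<Rightarrow> 'a set" where
  "Gamma V E u v = {y \<in> nbrs V E u. \<exists>l. gdist E u v l \<and> gdist E y v (l - 1)}"

definition partial_orientation :: "'a set \<Rightarrow> 'a set set \<Rightarrow> ('a \<times> 'a) set \<Rightarrow> bool" where
  "partial_orientation V E H \<longleftrightarrow> (\<forall>(u, v)\<in>H. adj E u v)"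

definition Ball_H :: "('a \<times> 'a) set \<Rightarrow> 'a \<Rightarrow> nat \<Rightarrow> 'a set" where
  "Ball_H H v a = {w. \<exists>k\<le>a. (v, w) \<in> H ^^ k}"

definition weak_guidance :: "'a set \<Rightarrow> 'a set set \<Rightarrow> nat \<Rightarrow> ('a \<times> 'a) set \<Rightarrow> bool" where
  "weak_guidance V E r H \<longleftrightarrow> partial_orientation V E H \<and>
     (\<forall>u\<in>V. \<forall>v\<in>V. \<forall>l. u \<noteq> v \<and> gdist E u v l \<and> l \<le> r \<longrightarrow>
        (\<exists>a b. a + b = l - 1 \<and>
           (\<exists>x\<in>Ball_H H u a. \<exists>y\<in>Ball_H H v b. adj E x y)))"

definition max_outdeg :: "'a set \<Rightarrow> ('a \<times> 'a) set \<Rightarrow> real" where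
  "max_outdeg V H = Max ((\<lambda>u. real (card {v. (u, v) \<in> H})) ` V)"

definition fractional_orientation :: "'a set \<Rightarrow> 'a set set \<Rightarrow> ('a \<Rightarrow> 'a \<Rightarrow> real) \<Rightarrow> bool" where
  "fractional_orientation V E p \<longleftrightarrow> (\<forall>u\<in>V. \<forall>v\<in>V. adj E u v \<longrightarrow> p u v \<ge> 0)"

definition frac_max_outdeg :: "'a set \<Rightarrow> 'a set set \<Rightarrow> ('a \<Rightarrow> 'a \<Rightarrow> real) \<Rightarrow> real" where
  "frac_max_outdeg V E p = Max ((\<lambda>u. \<Sum>v\<in>nbrs V E u. p u v) ` V)"

definition fractional_guidance :: "'a set \<Rightarrow> 'a set set \<Rightarrow> nat \<Rightarrow> ('a \<Rightarrow> 'a \<Rightarrow> real) \<Rightarrow> bool" where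
  "fractional_guidance V E r p \<longleftrightarrow> fractional_orientation V E p \<and>
     (\<forall>u\<in>V. \<forall>v\<in>V. \<forall>l. gdist E u v l \<and> 2 \<le> l \<and> l \<le> r \<longrightarrow>
        (\<Sum>y\<in>Gamma V E u v. p u y) + (\<Sum>y\<in>Gamma V E v u. p v y) \<ge> 1)"

end

theory Submission
  imports Defs
begin

(* In a graph of girth at least five, two distinct neighbours u and w of a vertex v are at
   distance two and v is their only common neighbour, so Gamma(u,w) = Gamma(w,u) = {v}.  Hence
   both a fractional and a weak 2-guidance system give the two arcs u -> v and w -> v of every
   such cherry u - v - w total weight at least one.
   Take a subgraph (S,F) of average degree d = mad with as few vertices as possible.  As d >= 2,
   deleting a vertex of degree at most one would not lower the average degree, so every vertex
   of S has at least two neighbours in F.  At each y in S the pairwise bound forces the arcs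
   entering y to weigh at least deg(y)/2; summing over S, the arcs of F weigh at least
   |F| = d |S| / 2 in total, so some vertex of S sends out weight at least d/2. *)

lemma adj_commute: "adj E u v \<longleftrightarrow> adj E v u"
  unfolding adj_def by (simp add: insert_commute)

lemma simple_graph_edgeE:
  assumes "simple_graph V E" "e \<in> E"
  obtains a b where "e = {a, b}" "a \<noteq> b" "a \<in> V" "b \<in> V"
  using assms unfolding simple_graph_def by blast

lemma simple_graph_finite_edges:
  assumes "simple_graph V E" shows "finite E"
proof -
  have "E \<subseteq> Pow V" using assms unfolding simple_graph_def by fastforce
  then show ?thesis by (rule finite_subset) (use assms in \<open>simp add: simple_graph_def\<close>)
qed

lemma adj_irrefl: "simple_graph V E \<Longrightarrow> \<not> adj E u u"
  unfolding simple_graph_def adj_def by (metis doubleton_eq_iff insert_absorb2)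

lemma adj_in_vertices:
  assumes "simple_graph V E" "adj E u v" shows "u \<in> V" "v \<in> V"
  using assms unfolding simple_graph_def adj_def by (auto simp: doubleton_eq_iff)

lemma nbrs_alt_def: "nbrs V E y = {u \<in> V. adj E u y}"
  unfolding nbrs_def using adj_commute by fastforce

lemma finite_nbrs: "simple_graph V E \<Longrightarrow> finite (nbrs V E u)"
  unfolding simple_graph_def nbrs_def by simp

lemma walk_Cons_Cons: "walk E (x # y # xs) \<longleftrightarrow> adj E x y \<and> walk E (y # xs)"
  unfolding walk_def by (simp add: All_less_Suc2)

lemma walk_single: "walk E [x]"
  by (simp add: walk_def)

lemma dist_le_0D: "dist_le E u v 0 \<Longrightarrow> u = v"
  unfolding dist_le_def walk_def by (auto simp: le_Suc_eq length_Suc_conv)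

lemma dist_le_1D: "dist_le E u v 1 \<Longrightarrow> u = v \<or> adj E u v"
  unfolding dist_le_def walk_def by (auto simp: le_Suc_eq length_Suc_conv)

lemma girth5_no_triangle:
  assumes G: "simple_graph V E" and girth: "girth_at_least E 5"
    and "adj E u v" "adj E v w"
  shows "\<not> adj E u w"
proof
  assume "adj E u w"
  then have "adj E w u" using adj_commute by metis
  moreover have "u \<noteq> v" "v \<noteq> w" "w \<noteq> u"
    using assms \<open>adj E w u\<close> adj_irrefl[OF G] by metis+
  ultimately have "cycle E [u, v, w]"
    using assms unfolding cycle_def by (simp add: walk_Cons_Cons walk_single)
  with girth show False unfolding girth_at_least_def by force
qed

lemma girth5_common_nbr_unique:
  assumes G: "simple_graph V E" and girth: "girth_at_least E 5"
    and "adj E u v" "adj E v w" "adj E u z" "adj E z w" "u \<noteq> w"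
  shows "z = v"
proof (rule ccontr)
  assume "z \<noteq> v"
  moreover have "u \<noteq> v" "v \<noteq> w" "w \<noteq> z" "z \<noteq> u"
    using assms adj_irrefl[OF G] by metis+
  ultimately have "cycle E [u, v, w, z]"
    using assms unfolding cycle_def by (auto simp: walk_Cons_Cons walk_single adj_commute)
  with girth show False unfolding girth_at_least_def by force
qed

lemma dist_le_refl: "dist_le E u u 0"
  unfolding dist_le_def using walk_single by fastforce

lemma gdist_unique: "gdist E u v l \<Longrightarrow> gdist E u v l' \<Longrightarrow> l = l'"
  unfolding gdist_def by (metis linorder_neqE_nat)

lemma gdist_1:
  assumes "adj E v w" "v \<noteq> w" shows "gdist E v w 1"
proof -
  have "dist_le E v w 1"
    unfolding dist_le_def using assms by (intro exI[of _ "[v, w]"]) (simp add: walk_Cons_Cons walk_single)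
  then show ?thesis unfolding gdist_def using assms(2) dist_le_0D[of E v w] by (auto simp: less_Suc_eq)
qed

lemma gdist_1D:
  assumes "gdist E v w 1" shows "adj E v w"
proof -
  have "dist_le E v w 1" "\<not> dist_le E v w 0" using assms unfolding gdist_def by auto
  then show ?thesis using dist_le_1D dist_le_refl by metis
qed

lemma gdist_2:
  assumes "adj E u v" "adj E v w" "u \<noteq> w" "\<not> adj E u w"
  shows "gdist E u w 2"
proof -
  have "dist_le E u w 2"
    unfolding dist_le_def using assms by (intro exI[of _ "[u, v, w]"]) (simp add: walk_Cons_Cons walk_single)
  moreover have "\<not> dist_le E u w m" if "m < 2" for m
    using that assms(3,4) dist_le_0D dist_le_1D by (metis less_2_cases One_nat_def)
  ultimately show ?thesis unfolding gdist_def by blast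
qed

lemma girth5_gdist_2:
  assumes G: "simple_graph V E" and girth: "girth_at_least E 5"
    and uv: "adj E u v" and vw: "adj E v w" and "u \<noteq> w"
  shows "gdist E u w 2"
  using gdist_2[OF uv vw \<open>u \<noteq> w\<close>] girth5_no_triangle[OF G girth uv vw] .

lemma girth5_Gamma_cherry:
  assumes G: "simple_graph V E" and girth: "girth_at_least E 5"
    and uv: "adj E u v" and vw: "adj E v w" and "u \<noteq> w"
  shows "Gamma V E u w = {v}"
proof -
  have uw: "gdist E u w 2" by (rule girth5_gdist_2[OF G girth uv vw \<open>u \<noteq> w\<close>])
  have "v \<noteq> w" using vw adj_irrefl[OF G] by metis
  then have "gdist E v w (2 - 1)" using gdist_1[OF vw] by simp
  then have "v \<in> Gamma V E u w"
    unfolding Gamma_def nbrs_def using uw uv adj_in_vertices[OF G uv] by blast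
  moreover have "y = v" if y: "y \<in> Gamma V E u w" for y
  proof -
    obtain l where uy: "adj E u y" and ul: "gdist E u w l" and yw: "gdist E y w (l - 1)"
      using y unfolding Gamma_def nbrs_def by blast
    have "l = 2" using gdist_unique[OF ul uw] .
    with yw have "adj E y w" using gdist_1D by simp
    then show "y = v" by (rule girth5_common_nbr_unique[OF G girth uv vw uy _ \<open>u \<noteq> w\<close>])
  qed
  ultimately show ?thesis by blast
qed

definition cherry_cover :: "'a set set \<Rightarrow> ('a \<Rightarrow> 'a \<Rightarrow> real) \<Rightarrow> bool" where
  "cherry_cover E p \<longleftrightarrow>
     (\<forall>u v w. adj E u v \<longrightarrow> adj E w v \<longrightarrow> u \<noteq> w \<longrightarrow> 1 \<le> p u v + p w v)"

lemma cherry_cover_mono: "F \<subseteq> E \<Longrightarrow> cherry_cover E p \<Longrightarrow> cherry_cover F p"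
  unfolding cherry_cover_def adj_def by blast

lemma fractional_guidance_cherry_cover:
  assumes G: "simple_graph V E" and girth: "girth_at_least E 5"
    and guide: "fractional_guidance V E 2 p"
  shows "cherry_cover E p"
  unfolding cherry_cover_def
proof (intro allI impI)
  fix u v w assume uv: "adj E u v" and wv: "adj E w v" and "u \<noteq> w"
  have vw: "adj E v w" and vu: "adj E v u" using uv wv adj_commute by metis+
  have "u \<in> V" "w \<in> V" using adj_in_vertices[OF G] uv wv by auto
  moreover have "gdist E u w 2" by (rule girth5_gdist_2[OF G girth uv vw \<open>u \<noteq> w\<close>])
  ultimately have "1 \<le> (\<Sum>y\<in>Gamma V E u w. p u y) + (\<Sum>y\<in>Gamma V E w u. p w y)"
    using guide unfolding fractional_guidance_def by blast
  also have "Gamma V E u w = {v}" by (rule girth5_Gamma_cherry[OF G girth uv vw \<open>u \<noteq> w\<close>])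
  also have "Gamma V E w u = {v}" using girth5_Gamma_cherry[OF G girth wv vu] \<open>u \<noteq> w\<close> by simp
  finally show "1 \<le> p u v + p w v" by simp
qed

lemma Ball_H_0: "Ball_H H u 0 = {u}"
  unfolding Ball_H_def by simp

lemma Ball_H_1: "Ball_H H u 1 = insert u {v. (u, v) \<in> H}"
  unfolding Ball_H_def by (auto simp: le_Suc_eq)

lemma weak_guidance_cherry_cover:
  assumes G: "simple_graph V E" and girth: "girth_at_least E 5"
    and guide: "weak_guidance V E 2 H"
  shows "cherry_cover E (\<lambda>u v. of_bool ((u, v) \<in> H))"
proof -
  have arc_adj: "adj E u v" if "(u, v) \<in> H" for u v
    using guide that unfolding weak_guidance_def partial_orientation_def by blast
  have arc_to_centre: "(s, v) \<in> H"
    if sv: "adj E s v" and tv: "adj E t v" and "s \<noteq> t" and y: "y \<in> Ball_H H s 1" and "adj E t y"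
    for s t v y
  proof -
    have "\<not> adj E t s" using girth5_no_triangle[OF G girth tv] sv adj_commute by metis
    then have "(s, y) \<in> H" using y \<open>adj E t y\<close> unfolding Ball_H_1 by auto
    moreover have "y = v"
      using girth5_common_nbr_unique[OF G girth tv _ \<open>adj E t y\<close> _] sv arc_adj[OF \<open>(s, y) \<in> H\<close>]
        \<open>s \<noteq> t\<close> adj_commute by metis
    ultimately show ?thesis by simp
  qed
  have "(u, v) \<in> H \<or> (w, v) \<in> H" if uv: "adj E u v" and wv: "adj E w v" and "u \<noteq> w" for u v w
  proof -
    have "u \<in> V" "w \<in> V" using adj_in_vertices[OF G] uv wv by auto
    moreover have "gdist E u w 2"
      using girth5_gdist_2[OF G girth uv _ \<open>u \<noteq> w\<close>] wv adj_commute by metis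
    ultimately obtain a b x y where "a + b = 1" "x \<in> Ball_H H u a" "y \<in> Ball_H H w b" "adj E x y"
      using guide \<open>u \<noteq> w\<close> unfolding weak_guidance_def by fastforce
    moreover have "a = 0 \<and> b = 1 \<or> a = 1 \<and> b = 0" using \<open>a + b = 1\<close> by arith
    ultimately consider "x = u" "y \<in> Ball_H H w 1" "adj E u y" | "y = w" "x \<in> Ball_H H u 1" "adj E w x"
      using adj_commute[of E x y] by (auto simp: Ball_H_0)
    then show ?thesis
      by cases (use arc_to_centre uv wv \<open>u \<noteq> w\<close> in blast)+
  qed
  then show ?thesis unfolding cherry_cover_def by fastforce
qed

lemma sum_ge_half_card:
  fixes q :: "'b \<Rightarrow> real"
  assumes fin: "finite N" and card: "2 \<le> card N"
    and pair: "\<And>u w. u \<in> N \<Longrightarrow> w \<in> N \<Longrightarrow> u \<noteq> w \<Longrightarrow> 1 \<le> q u + q w"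
  shows "real (card N) / 2 \<le> sum q N"
proof (cases "\<forall>u\<in>N. 1/2 \<le> q u")
  case True
  then have "(\<Sum>u\<in>N. 1/2) \<le> sum q N" by (intro sum_mono) auto
  then show ?thesis by simp
next
  case False
  then obtain u where u: "u \<in> N" "q u < 1/2" by auto
  have "(\<Sum>w\<in>N - {u}. 1 - q u) \<le> (\<Sum>w\<in>N - {u}. q w)"
    using pair u(1) by (intro sum_mono) (simp add: algebra_simps)
  moreover have "sum q N = q u + (\<Sum>w\<in>N - {u}. q w)" by (rule sum.remove[OF fin u(1)])
  moreover have "real (card (N - {u})) = real (card N) - 1"
    using u(1) fin card by (simp add: of_nat_diff)
  moreover have "real (card N) / 2 \<le> q u + (real (card N) - 1) * (1 - q u)"
  proof -
    have "(real (card N) - 2) * q u \<le> (real (card N) - 2) * (1/2)"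
      using card u(2) by (intro mult_left_mono) auto
    then show ?thesis by (simp add: algebra_simps)
  qed
  ultimately show ?thesis by simp
qed

lemma card_nbrs_eq_card_incident_edges:
  assumes "simple_graph V E"
  shows "card (nbrs V E y) = card {e \<in> E. y \<in> e}"
proof (rule bij_betw_same_card[of "\<lambda>u. {y, u}"], rule bij_betw_imageI)
  show "inj_on (\<lambda>u. {y, u}) (nbrs V E y)"
    by (rule inj_onI) (auto simp: doubleton_eq_iff)
  show "(\<lambda>u. {y, u}) ` nbrs V E y = {e \<in> E. y \<in> e}"
  proof (intro equalityI subsetI)
    fix e assume "e \<in> (\<lambda>u. {y, u}) ` nbrs V E y"
    then show "e \<in> {e \<in> E. y \<in> e}" unfolding nbrs_def adj_def by auto
  next
    fix e assume "e \<in> {e \<in> E. y \<in> e}"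
    then have "e \<in> E" "y \<in> e" by auto
    then obtain a b where e: "e = {a, b}" "a \<in> V" "b \<in> V"
      using simple_graph_edgeE[OF assms] by metis
    have "\<exists>u\<in>V. e = {y, u}"
    proof (cases "y = a")
      case True
      then show ?thesis using e by auto
    next
      case False
      then have "y = b" using e \<open>y \<in> e\<close> by auto
      then show ?thesis using e by (intro bexI[of _ a]) (auto simp: insert_commute)
    qed
    then show "e \<in> (\<lambda>u. {y, u}) ` nbrs V E y"
      using \<open>e \<in> E\<close> unfolding nbrs_def adj_def by auto
  qed
qed

lemma sum_card_nbrs:
  assumes G: "simple_graph V E"
  shows "(\<Sum>y\<in>V. card (nbrs V E y)) = 2 * card E"
proof -
  have "card {y \<in> V. y \<in> e} = 2" if e: "e \<in> E" for e
  proof -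
    obtain a b where "e = {a, b}" "a \<noteq> b" "a \<in> V" "b \<in> V"
      using simple_graph_edgeE[OF G e] .
    then have "{y \<in> V. y \<in> e} = {a, b}" by auto
    then show ?thesis using \<open>a \<noteq> b\<close> by simp
  qed
  then have "(\<Sum>y\<in>V. card {e \<in> E. y \<in> e}) = 2 * card E"
    using G simple_graph_finite_edges unfolding simple_graph_def by (intro sum_multicount) auto
  then show ?thesis using card_nbrs_eq_card_incident_edges[OF G] by simp
qed

lemma sum_nbrs_swap:
  assumes "finite V"
  shows "(\<Sum>y\<in>V. \<Sum>u\<in>nbrs V E y. f u y) = (\<Sum>u\<in>V. \<Sum>y\<in>nbrs V E u. f u y)"
proof -
  have "(\<Sum>y\<in>V. \<Sum>u\<in>nbrs V E y. f u y) = (\<Sum>y\<in>V. \<Sum>u\<in>V. if adj E u y then f u y else 0)"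
    using assms by (simp add: nbrs_alt_def sum.inter_filter)
  also have "\<dots> = (\<Sum>u\<in>V. \<Sum>y\<in>V. if adj E u y then f u y else 0)"
    by (rule sum.swap)
  also have "\<dots> = (\<Sum>u\<in>V. \<Sum>y\<in>nbrs V E u. f u y)"
    unfolding nbrs_def using assms by (simp add: sum.inter_filter)
  finally show ?thesis .
qed

lemma cherry_cover_total_weight:
  assumes G: "simple_graph V E" and deg: "\<forall>y\<in>V. 2 \<le> card (nbrs V E y)"
    and cover: "cherry_cover E p"
  shows "real (card E) \<le> (\<Sum>u\<in>V. \<Sum>y\<in>nbrs V E u. p u y)"
proof -
  have "(\<Sum>y\<in>V. real (card (nbrs V E y))) = 2 * real (card E)"
    using arg_cong[OF sum_card_nbrs[OF G], of real] by simp
  then have "real (card E) = (\<Sum>y\<in>V. real (card (nbrs V E y)) / 2)"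
    by (simp add: sum_divide_distrib[symmetric])
  also have "\<dots> \<le> (\<Sum>y\<in>V. \<Sum>u\<in>nbrs V E y. p u y)"
  proof (rule sum_mono)
    fix y assume "y \<in> V"
    show "real (card (nbrs V E y)) / 2 \<le> (\<Sum>u\<in>nbrs V E y. p u y)"
    proof (rule sum_ge_half_card)
      show "finite (nbrs V E y)" by (rule finite_nbrs[OF G])
      show "2 \<le> card (nbrs V E y)" using deg \<open>y \<in> V\<close> by blast
      fix u w assume "u \<in> nbrs V E y" "w \<in> nbrs V E y" "u \<noteq> w"
      then show "1 \<le> p u y + p w y"
        using cover unfolding nbrs_alt_def cherry_cover_def by blast
    qed
  qed
  also have "\<dots> = (\<Sum>u\<in>V. \<Sum>y\<in>nbrs V E u. p u y)"
    using G unfolding simple_graph_def by (intro sum_nbrs_swap) simp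
  finally show ?thesis .
qed

definition subgraph :: "'a set \<Rightarrow> 'a set set \<Rightarrow> 'a set \<Rightarrow> 'a set set \<Rightarrow> bool" where
  "subgraph V E S F \<longleftrightarrow> S \<subseteq> V \<and> F \<subseteq> E \<and> (\<forall>e\<in>F. e \<subseteq> S)"

lemma simple_graph_subgraph:
  assumes G: "simple_graph V E" and sub: "subgraph V E S F"
  shows "simple_graph S F"
proof -
  have "finite S" using G sub finite_subset unfolding simple_graph_def subgraph_def by blast
  moreover have "\<exists>a b. e = {a, b} \<and> a \<noteq> b \<and> a \<in> S \<and> b \<in> S" if e: "e \<in> F" for e
  proof -
    have "e \<in> E" "e \<subseteq> S" using sub e unfolding subgraph_def by auto
    then show ?thesis using simple_graph_edgeE[OF G] by (metis insert_subset)
  qed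
  ultimately show ?thesis unfolding simple_graph_def by blast
qed

lemma nbrs_subgraph_subset: "subgraph V E S F \<Longrightarrow> nbrs S F u \<subseteq> nbrs V E u"
  unfolding subgraph_def nbrs_def adj_def by blast

lemma mad_eq_Max_subgraph:
  "mad V E = Max {2 * real (card F) / real (card S) | S F. subgraph V E S F \<and> S \<noteq> {}}"
  unfolding mad_def subgraph_def by (rule arg_cong[where f = Max]) blast

lemma finite_subgraph_densities:
  assumes "simple_graph V E"
  shows "finite {2 * real (card F) / real (card S) | S F. subgraph V E S F \<and> S \<noteq> {}}"
proof -
  have "{(S, F). subgraph V E S F \<and> S \<noteq> {}} \<subseteq> Pow V \<times> Pow E" (is "?P \<subseteq> _")
    unfolding subgraph_def by auto
  then have "finite ?P"
    using assms simple_graph_finite_edges unfolding simple_graph_def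
    by (meson finite_Pow_iff finite_SigmaI finite_subset)
  moreover have "{2 * real (card F) / real (card S) | S F. subgraph V E S F \<and> S \<noteq> {}}
      = (\<lambda>(S, F). 2 * real (card F) / real (card S)) ` ?P"
    by auto
  ultimately show ?thesis by simp
qed

lemma subgraph_density_le_mad:
  assumes "simple_graph V E" "subgraph V E S F" "S \<noteq> {}"
  shows "2 * real (card F) / real (card S) \<le> mad V E"
  unfolding mad_eq_Max_subgraph using assms finite_subgraph_densities by (intro Max_ge) auto

lemma mad_attained:
  assumes "simple_graph V E" "V \<noteq> {}"
  obtains S F where "subgraph V E S F" "S \<noteq> {}" "2 * real (card F) / real (card S) = mad V E"
proof -
  obtain x where "x \<in> V" using assms(2) by blast
  then have "subgraph V E {x} {}" unfolding subgraph_def by blast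
  then have "{2 * real (card F) / real (card S) | S F. subgraph V E S F \<and> S \<noteq> {}} \<noteq> {}"
    by blast
  then have "mad V E \<in> {2 * real (card F) / real (card S) | S F. subgraph V E S F \<and> S \<noteq> {}}"
    unfolding mad_eq_Max_subgraph by (rule Max_in[OF finite_subgraph_densities[OF assms(1)]])
  then show ?thesis using that by force
qed

lemma density_le_delete_low_degree_vertex:
  assumes G: "simple_graph S F" and y: "y \<in> S" and deg: "card (nbrs S F y) \<le> 1"
    and dense: "card S \<le> card F"
  shows "S - {y} \<noteq> {}"
    and "2 * real (card F) / real (card S)
           \<le> 2 * real (card {e \<in> F. y \<notin> e}) / real (card (S - {y}))"
proof -
  have finS: "finite S" and finF: "finite F"
    using G simple_graph_finite_edges unfolding simple_graph_def by auto
  have "F \<noteq> {}" using dense y finS by (auto simp: card_gt_0_iff[symmetric])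
  then obtain a b where "a \<noteq> b" "a \<in> S" "b \<in> S"
    using simple_graph_edgeE[OF G] by (metis ex_in_conv)
  then have S2: "2 \<le> card S" using card_mono[OF finS, of "{a, b}"] by simp
  have S': "real (card (S - {y})) = real (card S) - 1" using y finS S2 by (simp add: of_nat_diff)
  show "S - {y} \<noteq> {}"
  proof
    assume empty: "S - {y} = {}"
    have "real (card S) - 1 = 0" using S' unfolding empty by simp
    with S2 show False by simp
  qed
  have "card {e \<in> F. y \<in> e} \<le> 1"
    using deg card_nbrs_eq_card_incident_edges[OF G] by simp
  moreover have "card F = card ({e \<in> F. y \<in> e} \<union> {e \<in> F. y \<notin> e})"
    by (rule arg_cong[where f = card]) blast
  moreover have "\<dots> = card {e \<in> F. y \<in> e} + card {e \<in> F. y \<notin> e}"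
    by (rule card_Un_disjoint) (use finF in auto)
  ultimately have F': "real (card F) - 1 \<le> real (card {e \<in> F. y \<notin> e})" by linarith
  have "2 * real (card F) / real (card S) \<le> 2 * (real (card F) - 1) / (real (card S) - 1)"
    using dense S2 by (simp add: divide_simps algebra_simps)
  also have "\<dots> \<le> 2 * real (card {e \<in> F. y \<notin> e}) / real (card (S - {y}))"
    using F' S' S2 by (simp add: divide_right_mono)
  finally show "2 * real (card F) / real (card S)
      \<le> 2 * real (card {e \<in> F. y \<notin> e}) / real (card (S - {y}))" .
qed

lemma densest_subgraph_min_degree:
  assumes G: "simple_graph V E" and mad2: "2 \<le> mad V E"
    and "subgraph V E S F" "S \<noteq> {}" "2 * real (card F) / real (card S) = mad V E"
  shows "\<exists>S F. subgraph V E S F \<and> S \<noteq> {} \<and> 2 * real (card F) / real (card S) = mad V E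
           \<and> (\<forall>y\<in>S. 2 \<le> card (nbrs S F y))"
  using assms(3-5)
proof (induction "card S" arbitrary: S F rule: less_induct)
  case less
  show ?case
  proof (cases "\<forall>y\<in>S. 2 \<le> card (nbrs S F y)")
    case True
    then show ?thesis using less.prems by blast
  next
    case False
    then obtain y where y: "y \<in> S" "card (nbrs S F y) \<le> 1" by force
    have GS: "simple_graph S F" by (rule simple_graph_subgraph[OF G less.prems(1)])
    then have "finite S" unfolding simple_graph_def by blast
    then have pos: "0 < real (card S)" using less.prems(2) by (simp add: card_gt_0_iff)
    have "2 \<le> 2 * real (card F) / real (card S)" using less.prems(3) mad2 by simp
    then have "2 * real (card S) \<le> 2 * real (card F)"
      unfolding pos_le_divide_eq[OF pos] by (simp add: mult.commute)
    then have "card S \<le> card F" by simp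
    note delete = density_le_delete_low_degree_vertex[OF GS y this]
    define S' where "S' = S - {y}"
    define F' where "F' = {e \<in> F. y \<notin> e}"
    have sub': "subgraph V E S' F'"
      using less.prems(1) unfolding subgraph_def S'_def F'_def by blast
    have "2 * real (card F') / real (card S') = mad V E"
      using delete(2) subgraph_density_le_mad[OF G sub'] delete(1) less.prems(3)
      unfolding S'_def F'_def by linarith
    moreover have "card S' < card S"
      unfolding S'_def using \<open>finite S\<close> y(1) by (rule card_Diff1_less)
    ultimately show ?thesis
      using less.hyps sub' delete(1) unfolding S'_def by blast
  qed
qed

lemma cherry_cover_out_weight_ge_half_mad:
  assumes G: "simple_graph V E" and "V \<noteq> {}" and "2 \<le> mad V E"
    and nonneg: "\<And>u v. adj E u v \<Longrightarrow> 0 \<le> p u v" and cover: "cherry_cover E p"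
  obtains u where "u \<in> V" "mad V E / 2 \<le> (\<Sum>y\<in>nbrs V E u. p u y)"
proof -
  obtain S F where sub: "subgraph V E S F" and "S \<noteq> {}"
    and density: "2 * real (card F) / real (card S) = mad V E"
    and deg: "\<forall>y\<in>S. 2 \<le> card (nbrs S F y)"
    using mad_attained[OF G \<open>V \<noteq> {}\<close>] densest_subgraph_min_degree[OF G \<open>2 \<le> mad V E\<close>]
    by metis
  have GS: "simple_graph S F" by (rule simple_graph_subgraph[OF G sub])
  then have S_pos: "0 < card S" using \<open>S \<noteq> {}\<close> unfolding simple_graph_def by (simp add: card_gt_0_iff)
  have "real (card F) \<le> (\<Sum>u\<in>S. \<Sum>y\<in>nbrs S F u. p u y)"
    using sub cherry_cover_total_weight[OF GS deg cherry_cover_mono[OF _ cover]]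
    unfolding subgraph_def by blast
  also have "\<dots> \<le> (\<Sum>u\<in>S. \<Sum>y\<in>nbrs V E u. p u y)"
  proof (intro sum_mono sum_mono2)
    fix u y assume "y \<in> nbrs V E u - nbrs S F u"
    then show "0 \<le> p u y" using nonneg unfolding nbrs_def by blast
  qed (use finite_nbrs[OF G] nbrs_subgraph_subset[OF sub] in auto)
  finally have total: "real (card S) * (mad V E / 2) \<le> (\<Sum>u\<in>S. \<Sum>y\<in>nbrs V E u. p u y)"
    using density S_pos by (simp add: field_simps)
  have "\<exists>u\<in>S. mad V E / 2 \<le> (\<Sum>y\<in>nbrs V E u. p u y)"
  proof (rule ccontr)
    assume "\<not> ?thesis"
    then have "(\<Sum>u\<in>S. \<Sum>y\<in>nbrs V E u. p u y) < real (card S) * (mad V E / 2)"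
      using S_pos by (intro sum_bounded_above_strict) (auto simp: not_le)
    with total show False by simp
  qed
  then show thesis using that sub unfolding subgraph_def by blast
qed

lemma card_out_arcs_eq_sum_nbrs:
  assumes "simple_graph V E" "partial_orientation V E H"
  shows "real (card {v. (u, v) \<in> H}) = (\<Sum>y\<in>nbrs V E u. of_bool ((u, y) \<in> H))"
proof -
  have "nbrs V E u \<inter> {y. (u, y) \<in> H} = {v. (u, v) \<in> H}"
    using assms(2) adj_in_vertices(2)[OF assms(1)] unfolding nbrs_def partial_orientation_def by auto
  then show ?thesis using finite_nbrs[OF assms(1)] by simp
qed

lemma frac_max_outdeg_ge:
  "finite V \<Longrightarrow> u \<in> V \<Longrightarrow> (\<Sum>y\<in>nbrs V E u. p u y) \<le> frac_max_outdeg V E p"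
  unfolding frac_max_outdeg_def by (rule Max_ge) auto

lemma max_outdeg_ge:
  "finite V \<Longrightarrow> u \<in> V \<Longrightarrow> real (card {v. (u, v) \<in> H}) \<le> max_outdeg V H"
  unfolding max_outdeg_def by (rule Max_ge) auto

theorem lemma29:
  fixes V :: "'a set" and E :: "'a set set" and d :: real
  assumes "simple_graph V E"
    and "V \<noteq> {}"
    and "girth_at_least E 5"
    and "mad V E = d"
    and "d \<ge> 2"
  shows "(\<forall>p. fractional_guidance V E 2 p \<longrightarrow> frac_max_outdeg V E p \<ge> d / 2) \<and>
         (\<forall>H. weak_guidance V E 2 H \<longrightarrow> max_outdeg V H \<ge> d / 2)"
proof -
  note G = assms(1) and girth = assms(3)
  have mad2: "2 \<le> mad V E" and finite_V: "finite V"
    using assms unfolding simple_graph_def by auto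
  have "d / 2 \<le> frac_max_outdeg V E p" if guide: "fractional_guidance V E 2 p" for p
  proof -
    have "\<And>u v. adj E u v \<Longrightarrow> 0 \<le> p u v"
      using guide adj_in_vertices[OF G] unfolding fractional_guidance_def fractional_orientation_def by blast
    then obtain u where "u \<in> V" "mad V E / 2 \<le> (\<Sum>y\<in>nbrs V E u. p u y)"
      using cherry_cover_out_weight_ge_half_mad[OF G assms(2) mad2]
        fractional_guidance_cherry_cover[OF G girth guide] by metis
    then show ?thesis using frac_max_outdeg_ge[OF finite_V \<open>u \<in> V\<close>, where E = E and p = p] assms(4)
      by linarith
  qed
  moreover have "d / 2 \<le> max_outdeg V H" if guide: "weak_guidance V E 2 H" for H
  proof -
    have orient: "partial_orientation V E H" using guide unfolding weak_guidance_def by blast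
    obtain u where "u \<in> V" "mad V E / 2 \<le> (\<Sum>y\<in>nbrs V E u. of_bool ((u, y) \<in> H))"
      using cherry_cover_out_weight_ge_half_mad[OF G assms(2) mad2 _
          weak_guidance_cherry_cover[OF G girth guide]] by auto
    then show ?thesis
      using card_out_arcs_eq_sum_nbrs[OF G orient, of u]
        max_outdeg_ge[OF finite_V \<open>u \<in> V\<close>, where H = H] assms(4)
      by linarith
  qed
  ultimately show ?thesis by blast
qed

end
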